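(* Let $a\geq b\geq c\geq d>0$. If $ad-bc>0$, then $$\frac{H(a,b)}{H(c,d)}<\frac{G(a,b)}{G(c,d)}<\frac{L(a,b)}{L(c,d)}<\frac{I(a,b)}{I(c,d)}<\frac{A(a,b)}{A(c,d)}.$$ If $ad-bc<0$, all these inequalities are reversed (strictly), and if $ad-bc=0$, all of them become equalities.
   Context: For $u,v>0$: $A(u,v)=\frac{u+v}{2}$, $G(u,v)=\sqrt{uv}$, $H(u,v)=\frac{2}{1/u+1/v}$; the logarithmic mean is $L(u,v)=\frac{u-v}{\ln u-\ln v}$ if $u\neq v$ and $L(u,u)=u$; the identric mean is $I(u,v)=\frac{1}{e}\left(\frac{u^u}{v^v}\right)^{1/(u-v)}$ if $u\neq v$ and $I(u,u)=u$. *)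

theory Defs
  imports Complex_Main
begin

definition AM :: "real \<Rightarrow> real \<Rightarrow> real" where
  "AM u v = (u + v) / 2"

definition GM :: "real \<Rightarrow> real \<Rightarrow> real" where
  "GM u v = sqrt (u * v)"

definition HM :: "real \<Rightarrow> real \<Rightarrow> real" where
  "HM u v = 2 / (1 / u + 1 / v)"

definition LM :: "real \<Rightarrow> real \<Rightarrow> real" where
  "LM u v = (if u = v then u else (u - v) / (ln u - ln v))"

definition IM :: "real \<Rightarrow> real \<Rightarrow> real" where
  "IM u v = (if u = v then u
             else (1 / exp 1) * ((u powr u / v powr v) powr (1 / (u - v))))"

end

theory Submission
  imports Defs "HOL-Real_Asymp.Real_Asymp"
begin

text \<open>Write \<open>u = v e\<^sup>2\<^sup>s\<close>. Then \<open>H, G, L, I, A\<close> at \<open>(u, v)\<close> are \<open>G(u, v) = v e\<^sup>s\<close> times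
  \<open>1/cosh s\<close>, \<open>1\<close>, \<open>sinh s / s\<close>, \<open>exp (s coth s - 1)\<close> and \<open>cosh s\<close> respectively, and each of
  these factors divided by the previous one is strictly increasing for \<open>s \<ge> 0\<close>: its logarithm
  vanishes at \<open>0\<^sup>+\<close> and has positive derivative, by \<open>s < sinh s < s cosh s\<close>. Since
  \<open>ad - bc\<close> has the sign of \<open>ln (a/b) - ln (c/d)\<close>, comparing the ratios of two means at
  \<open>(a, b)\<close> and \<open>(c, d)\<close> amounts to comparing such an increasing factor at the two values of \<open>s\<close>.\<close>

lemma less_sinh:
  fixes s :: real
  assumes "0 < s"
  shows "s < sinh s"
proof -
  have "(\<lambda>t. sinh t - t) 0 < (\<lambda>t. sinh t - t) s"
  proof (rule DERIV_pos_imp_increasing_open[OF assms])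
    fix t :: real
    assume "0 < t" "t < s"
    then have "1 < cosh t"
      using cosh_real_nonneg_less_iff[of 0 t] by simp
    then show "\<exists>y. ((\<lambda>t. sinh t - t) has_real_derivative y) (at t) \<and> 0 < y"
      by (intro exI[of _ "cosh t - 1"]) (auto intro!: derivative_eq_intros)
  qed (intro continuous_intros)
  then show ?thesis by simp
qed

lemma sinh_less_mult_cosh:
  fixes s :: real
  assumes "0 < s"
  shows "sinh s < s * cosh s"
proof -
  have "(\<lambda>t. t * cosh t - sinh t) 0 < (\<lambda>t. t * cosh t - sinh t) s"
  proof (rule DERIV_pos_imp_increasing_open[OF assms])
    fix t :: real
    assume "0 < t" "t < s"
    then have "0 < t * sinh t" by simp
    then show "\<exists>y. ((\<lambda>t. t * cosh t - sinh t) has_real_derivative y) (at t) \<and> 0 < y"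
      by (intro exI[of _ "t * sinh t"]) (auto intro!: derivative_eq_intros simp: algebra_simps)
  qed (intro continuous_intros)
  then show ?thesis by simp
qed

lemma strict_mono_on_exp_of_pos_deriv:
  fixes R \<phi> \<phi>' :: "real \<Rightarrow> real"
  assumes R0: "R 0 = 1" and R_exp: "\<And>s. 0 < s \<Longrightarrow> R s = exp (\<phi> s)"
    and deriv: "\<And>s. 0 < s \<Longrightarrow> (\<phi> has_real_derivative \<phi>' s) (at s)"
    and deriv_pos: "\<And>s. 0 < s \<Longrightarrow> 0 < \<phi>' s"
    and lim: "(\<phi> \<longlongrightarrow> 0) (at_right 0)"
  shows "strict_mono_on {0..} R"
proof -
  have inc: "\<phi> p < \<phi> q" if "0 < p" "p < q" for p q
    using that deriv deriv_pos
    by (intro DERIV_pos_imp_increasing[OF \<open>p < q\<close>]) (meson less_le_trans)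
  have pos: "0 < \<phi> q" if "0 < q" for q
  proof -
    have "eventually (\<lambda>t. \<phi> t \<le> \<phi> (q/2)) (at_right 0)"
      unfolding eventually_at_right_field using that
      by (intro exI[of _ "q/2"]) (auto intro!: less_imp_le inc)
    then have "0 \<le> \<phi> (q/2)"
      by (rule tendsto_upperbound[OF lim]) simp
    also have "\<phi> (q/2) < \<phi> q"
      using inc[of "q/2" q] that by simp
    finally show ?thesis .
  qed
  show ?thesis
  proof (rule strict_mono_onI)
    fix p q :: real
    assume "p \<in> {0..}" "q \<in> {0..}" "p < q"
    then show "R p < R q"
      using inc[of p q] pos[of q] by (cases "p = 0") (auto simp: R0 R_exp)
  qed
qed

text \<open>The values at \<open>0\<close> are the limits for \<open>s \<rightarrow> 0\<close>.\<close>

definition lm_factor :: "real \<Rightarrow> real" where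
  "lm_factor s = (if s = 0 then 1 else sinh s / s)"

definition im_factor :: "real \<Rightarrow> real" where
  "im_factor s = (if s = 0 then 1 else exp (s * cosh s / sinh s - 1))"

lemma exp_double_power2: "exp (2 * s) = (exp s)\<^sup>2" for s :: real
  by (simp add: power2_eq_square flip: exp_add)

lemma cosh_eq_exp_power2: "cosh s = ((exp s)\<^sup>2 + 1) / (2 * exp s)" for s :: real
  by (simp add: cosh_field_def exp_minus field_simps power2_eq_square)

lemma sinh_eq_exp_power2: "sinh s = ((exp s)\<^sup>2 - 1) / (2 * exp s)" for s :: real
  by (simp add: sinh_field_def exp_minus field_simps power2_eq_square)

lemma exp_power2_eq_1_iff: "(exp s)\<^sup>2 = 1 \<longleftrightarrow> s = 0" for s :: real
  by (simp flip: exp_double_power2)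

lemma HM_exp_param: "0 < v \<Longrightarrow> HM (v * exp (2 * s)) v = v * exp s / cosh s"
  unfolding HM_def cosh_eq_exp_power2 exp_double_power2
  by (simp add: field_simps power2_eq_square)

lemma GM_exp_param: "0 < v \<Longrightarrow> GM (v * exp (2 * s)) v = v * exp s"
  unfolding GM_def exp_double_power2 by (simp add: power2_eq_square real_sqrt_mult)

lemma AM_exp_param: "0 < v \<Longrightarrow> AM (v * exp (2 * s)) v = v * exp s * cosh s"
  unfolding AM_def cosh_eq_exp_power2 exp_double_power2 by (simp add: field_simps)

lemma LM_exp_param:
  assumes "0 < v"
  shows "LM (v * exp (2 * s)) v = v * exp s * lm_factor s"
proof (cases "s = 0")
  case False
  have "ln (v * exp (2 * s)) - ln v = 2 * s"
    using assms by (simp add: ln_mult)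
  then show ?thesis
    using False assms exp_power2_eq_1_iff[of s] unfolding LM_def lm_factor_def sinh_eq_exp_power2 exp_double_power2
    by (simp add: field_simps)
qed (simp add: LM_def lm_factor_def)

lemma IM_exp_param:
  assumes v: "0 < v"
  shows "IM (v * exp (2 * s)) v = v * exp s * im_factor s"
proof (cases "s = 0")
  case False
  define u where "u = v * exp (2 * s)"
  have u: "0 < u" "u \<noteq> v"
    using v False unfolding u_def by auto
  have ln_u: "ln u = ln v + 2 * s"
    using v unfolding u_def by (simp add: ln_mult)
  have "ln (u powr u / v powr v) / (u - v) = ln v + 2 * s * u / (u - v)"
    using u v by (simp add: ln_div ln_powr ln_u field_simps)
  then have "(u powr u / v powr v) powr (1 / (u - v)) = v * exp (2 * s * u / (u - v))"
    using u v by (simp add: powr_def exp_add)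
  moreover have "2 * s * u / (u - v) = s + s * cosh s / sinh s"
    using v False exp_power2_eq_1_iff[of s] unfolding u_def exp_double_power2 cosh_eq_exp_power2 sinh_eq_exp_power2
    by (simp add: field_simps)
  ultimately show ?thesis
    using u False unfolding IM_def im_factor_def u_def
    by (simp add: exp_add exp_diff)
qed (simp add: IM_def im_factor_def)

lemma lm_factor_pos: "0 < lm_factor s"
  by (auto simp: lm_factor_def zero_less_divide_iff)

lemma im_factor_pos: "0 < im_factor s"
  by (simp add: im_factor_def)

lemma strict_mono_on_lm_factor: "strict_mono_on {0..} lm_factor"
proof (rule strict_mono_on_exp_of_pos_deriv)
  fix s :: real
  assume s: "0 < s"
  show "lm_factor s = exp (ln (sinh s) - ln s)"
    using s by (simp add: lm_factor_def exp_diff)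
  show "((\<lambda>s. ln (sinh s) - ln s) has_real_derivative cosh s / sinh s - 1 / s) (at s)"
    using s by (auto intro!: derivative_eq_intros)
  show "0 < cosh s / sinh s - 1 / s"
    using s sinh_less_mult_cosh[OF s] by (simp add: field_simps)
qed (simp_all add: lm_factor_def, real_asymp)

lemma strict_mono_on_im_factor_div_lm_factor:
  "strict_mono_on {0..} (\<lambda>s. im_factor s / lm_factor s)"
proof (rule strict_mono_on_exp_of_pos_deriv)
  fix s :: real
  assume s: "0 < s"
  show "im_factor s / lm_factor s = exp (s * cosh s / sinh s - 1 + ln s - ln (sinh s))"
    using s by (simp add: im_factor_def lm_factor_def exp_add exp_diff)
  show "((\<lambda>s. s * cosh s / sinh s - 1 + ln s - ln (sinh s))
          has_real_derivative 1 / s - s / (sinh s)\<^sup>2) (at s)"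
    using s
    by (auto intro!: derivative_eq_intros simp: field_simps power2_eq_square)
       (use cosh_square_eq[of s] in algebra)
  have "s * s < sinh s * sinh s"
    using s less_sinh[OF s] by (intro mult_strict_mono) auto
  then show "0 < 1 / s - s / (sinh s)\<^sup>2"
    using s by (simp add: field_simps power2_eq_square)
qed (simp_all add: im_factor_def lm_factor_def, real_asymp)

lemma strict_mono_on_cosh_div_im_factor:
  "strict_mono_on {0..} (\<lambda>s. cosh s / im_factor s)"
proof (rule strict_mono_on_exp_of_pos_deriv)
  fix s :: real
  assume s: "0 < s"
  show "cosh s / im_factor s = exp (ln (cosh s) + 1 - s * cosh s / sinh s)"
    using s by (simp add: im_factor_def exp_add exp_diff)
  show "((\<lambda>s. ln (cosh s) + 1 - s * cosh s / sinh s)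
          has_real_derivative (s * cosh s - sinh s) / ((sinh s)\<^sup>2 * cosh s)) (at s)"
    using s
    by (auto intro!: derivative_eq_intros simp: field_simps power2_eq_square)
       (use cosh_square_eq[of s] in algebra)
  show "0 < (s * cosh s - sinh s) / ((sinh s)\<^sup>2 * cosh s)"
    using s sinh_less_mult_cosh[OF s] by simp
qed (simp_all add: im_factor_def, real_asymp)

lemma mean_ratio_trichotomy:
  fixes M N :: "real \<Rightarrow> real \<Rightarrow> real" and f g :: "real \<Rightarrow> real"
  assumes M_param: "\<And>v s. 0 < v \<Longrightarrow> 0 \<le> s \<Longrightarrow> M (v * exp (2 * s)) v = v * exp s * f s"
    and N_param: "\<And>v s. 0 < v \<Longrightarrow> 0 \<le> s \<Longrightarrow> N (v * exp (2 * s)) v = v * exp s * g s"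
    and f_pos: "\<And>s. 0 \<le> s \<Longrightarrow> 0 < f s" and g_pos: "\<And>s. 0 \<le> s \<Longrightarrow> 0 < g s"
    and mono: "strict_mono_on {0..} (\<lambda>s. g s / f s)"
    and "b \<le> a" "d \<le> c" "0 < b" "0 < d"
  shows "(0 < a * d - b * c \<longrightarrow> M a b / M c d < N a b / N c d) \<and>
         (a * d - b * c < 0 \<longrightarrow> M a b / M c d > N a b / N c d) \<and>
         (a * d - b * c = 0 \<longrightarrow> M a b / M c d = N a b / N c d)"
proof -
  define x where "x = ln (a / b) / 2"
  define y where "y = ln (c / d) / 2"
  have a: "a = b * exp (2 * x)" and c: "c = d * exp (2 * y)"
    using assms unfolding x_def y_def by simp_all
  have "0 \<le> x" "0 \<le> y"
    using assms unfolding x_def y_def by simp_all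
  then have pos: "0 < f x" "0 < f y" "0 < g x" "0 < g y"
    using f_pos g_pos by auto
  have sign: "a * d - b * c = b * d * (exp (2 * x) - exp (2 * y))"
    unfolding a c by (simp add: algebra_simps)
  have ratios: "M a b / M c d = b * exp x * f x / (d * exp y * f y)"
      "N a b / N c d = b * exp x * g x / (d * exp y * g y)"
    unfolding a c using M_param N_param assms \<open>0 \<le> x\<close> \<open>0 \<le> y\<close> by simp_all
  have "M a b / M c d < N a b / N c d \<longleftrightarrow> g y / f y < g x / f x"
       "M a b / M c d > N a b / N c d \<longleftrightarrow> g x / f x < g y / f y"
    unfolding ratios using pos assms by (simp_all add: field_simps)
  then show ?thesis
    using strict_mono_onD[OF mono, of y x] strict_mono_onD[OF mono, of x y]
      \<open>0 \<le> x\<close> \<open>0 \<le> y\<close> assms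
    by (auto simp: sign zero_less_mult_iff mult_less_0_iff)
qed

theorem theorem3p4:
  fixes a b c d :: real
  assumes "a \<ge> b" and "b \<ge> c" and "c \<ge> d" and "d > 0"
  shows "(a * d - b * c > 0 \<longrightarrow>
            HM a b / HM c d < GM a b / GM c d \<and>
            GM a b / GM c d < LM a b / LM c d \<and>
            LM a b / LM c d < IM a b / IM c d \<and>
            IM a b / IM c d < AM a b / AM c d)
       \<and> (a * d - b * c < 0 \<longrightarrow>
            HM a b / HM c d > GM a b / GM c d \<and>
            GM a b / GM c d > LM a b / LM c d \<and>
            LM a b / LM c d > IM a b / IM c d \<and>
            IM a b / IM c d > AM a b / AM c d)
       \<and> (a * d - b * c = 0 \<longrightarrow>
            HM a b / HM c d = GM a b / GM c d \<and>
            GM a b / GM c d = LM a b / LM c d \<and>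
            LM a b / LM c d = IM a b / IM c d \<and>
            IM a b / IM c d = AM a b / AM c d)"
proof -
  have order: "b \<le> a" "d \<le> c" "0 < b" "0 < d"
    using assms by auto
  have H: "HM (v * exp (2 * s)) v = v * exp s * (1 / cosh s)" if "0 < v" for v s
    using HM_exp_param[OF that] by simp
  have G: "GM (v * exp (2 * s)) v = v * exp s * 1" if "0 < v" for v s
    using GM_exp_param[OF that] by simp
  have cosh_mono: "strict_mono_on {0..} (\<lambda>s::real. 1 / (1 / cosh s))"
    by (rule strict_mono_onI) (simp add: cosh_real_nonneg_less_iff)
  note H_G = mean_ratio_trichotomy[OF H G _ _ cosh_mono order]
  note G_L = mean_ratio_trichotomy[OF G LM_exp_param _ lm_factor_pos _ order]
  note L_I = mean_ratio_trichotomy[OF LM_exp_param IM_exp_param lm_factor_pos im_factor_pos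
      strict_mono_on_im_factor_div_lm_factor order]
  note I_A = mean_ratio_trichotomy[OF IM_exp_param AM_exp_param im_factor_pos _
      strict_mono_on_cosh_div_im_factor order]
  show ?thesis
    using H_G G_L L_I I_A strict_mono_on_lm_factor by auto
qed

end
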